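(* Let $\mathcal{L}$ be a finite geometric lattice, $\mathcal{G}$ a building set of $\mathcal{L}$, and $G\in\mathcal{G}$. Then $\mathcal{G}\setminus\{G\}$ is a building set of $\mathcal{L}$ if and only if the join map \[ \prod_{F\in\max(\mathcal{G}\setminus\{G\})_{\leqslant G}}[\hat0,F]\to[\hat0,G],\qquad (H_F)_F\mapsto\bigvee_F H_F, \] is an isomorphism of posets.
   Context: For $\mathcal{H}\subseteq\mathcal{L}$ and $F\in\mathcal{L}$, $\mathcal{H}_{\leqslant F}=\{H\in\mathcal{H}:H\leqslant F\}$ and $\max\mathcal{H}_{\leqslant F}$ is its set of maximal elements. A building set of $\mathcal{L}$ is $\mathcal{G}\subseteq\mathcal{L}\setminus\{\hat0\}$ such that for every $F\neq\hat0$ the join map $\prod_{H\in\max\mathcal{G}_{\leqslant F}}[\hat0,H]\to[\hat0,F]$ is a poset isomorphism. *)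

theory Defs
  imports Main
begin

text \<open>A finite lattice is modelled by a type of class finite and complete_lattice
(every finite lattice is complete); its bottom element is bot.\<close>

definition covers :: "'a::order \<Rightarrow> 'a \<Rightarrow> bool" where
  "covers a b \<longleftrightarrow> a < b \<and> \<not> (\<exists>c. a < c \<and> c < b)"

definition is_atom :: "'a::complete_lattice \<Rightarrow> bool" where
  "is_atom a \<longleftrightarrow> covers bot a"

definition geometric_lattice :: "'a::{finite,complete_lattice} itself \<Rightarrow> bool" where
  "geometric_lattice _ \<longleftrightarrow>
     (\<forall>x::'a. x = Sup {a. is_atom a \<and> a \<le> x}) \<and>
     (\<forall>a b::'a. covers (inf a b) a \<longrightarrow> covers b (sup a b))"

definition maximal_elems :: "'a::order set \<Rightarrow> 'a set" where
  "maximal_elems S = {x \<in> S. \<forall>y \<in> S. x \<le> y \<longrightarrow> y = x}"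

text \<open>Elements of the product of intervals [bot, H], H in M, represented as
functions supported on M.\<close>
definition interval_product :: "'a::complete_lattice set \<Rightarrow> ('a \<Rightarrow> 'a) set" where
  "interval_product M = {h. (\<forall>H\<in>M. bot \<le> h H \<and> h H \<le> H) \<and> (\<forall>H. H \<notin> M \<longrightarrow> h H = bot)}"

definition join_map_iso :: "'a::complete_lattice set \<Rightarrow> 'a \<Rightarrow> bool" where
  "join_map_iso M F \<longleftrightarrow>
     bij_betw (\<lambda>h. Sup (h ` M)) (interval_product M) {bot..F} \<and>
     (\<forall>h\<in>interval_product M. \<forall>h'\<in>interval_product M.
        (\<forall>H\<in>M. h H \<le> h' H) \<longleftrightarrow> Sup (h ` M) \<le> Sup (h' ` M))"

definition building_set :: "'a::complete_lattice set \<Rightarrow> bool" where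
  "building_set \<G> \<longleftrightarrow> \<G> \<subseteq> UNIV - {bot} \<and>
     (\<forall>F. F \<noteq> bot \<longrightarrow> join_map_iso (maximal_elems {H \<in> \<G>. H \<le> F}) F)"

end

theory Submission
  imports Defs
begin

(* Only the backward direction needs an argument, and only below elements F for which G is
   maximal among the elements of the building set below F (otherwise removing G does not change
   those maximal elements). Then the new maximal elements below F are the old ones other than G
   together with the maximal elements N of the smaller set below G; the building property keeps
   the former apart from everything below G. The join map for them factors through the old one,
   the block [bot,G] being replaced by the product over N, which is isomorphic to it by
   hypothesis. *)

lemma maximal_elems_dominate:
  fixes S :: "'a::order set"
  assumes "finite S" "x \<in> S"
  obtains y where "y \<in> maximal_elems S" "x \<le> y"
  using finite_has_maximal2[OF assms] that unfolding maximal_elems_def by auto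

lemma maximal_elems_remove_nonmaximal:
  fixes S :: "'a::order set"
  assumes "finite S" "G \<notin> maximal_elems S"
  shows "maximal_elems (S - {G}) = maximal_elems S"
proof (intro set_eqI iffI)
  fix x assume x: "x \<in> maximal_elems (S - {G})"
  then obtain y where y: "y \<in> maximal_elems S" "x \<le> y"
    using maximal_elems_dominate[OF assms(1)] unfolding maximal_elems_def by blast
  with assms(2) x show "x \<in> maximal_elems S"
    unfolding maximal_elems_def by auto
next
  fix x assume "x \<in> maximal_elems S"
  with assms(2) show "x \<in> maximal_elems (S - {G})"
    unfolding maximal_elems_def by auto
qed

lemma maximal_elems_remove_maximal:
  fixes S :: "'a::order_bot set"
  assumes "finite S" "bot \<notin> S" "G \<in> maximal_elems S"
    and apart: "\<And>H x. H \<in> maximal_elems S \<Longrightarrow> H \<noteq> G \<Longrightarrow> x \<le> H \<Longrightarrow> x \<le> G \<Longrightarrow> x = bot"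
  shows "maximal_elems (S - {G}) =
         (maximal_elems S - {G}) \<union> maximal_elems {H \<in> S - {G}. H \<le> G}"
proof (intro set_eqI iffI)
  fix x assume x: "x \<in> maximal_elems (S - {G})"
  then obtain y where y: "y \<in> maximal_elems S" "x \<le> y"
    using maximal_elems_dominate[OF assms(1)] unfolding maximal_elems_def by blast
  with x show "x \<in> (maximal_elems S - {G}) \<union> maximal_elems {H \<in> S - {G}. H \<le> G}"
    unfolding maximal_elems_def by (cases "y = G") auto
next
  fix x assume "x \<in> (maximal_elems S - {G}) \<union> maximal_elems {H \<in> S - {G}. H \<le> G}"
  then show "x \<in> maximal_elems (S - {G})"
  proof
    assume "x \<in> maximal_elems S - {G}"
    then show ?thesis unfolding maximal_elems_def by auto
  next
    assume x: "x \<in> maximal_elems {H \<in> S - {G}. H \<le> G}"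
    have "z = x" if z: "z \<in> S - {G}" "x \<le> z" for z
    proof -
      obtain y where y: "y \<in> maximal_elems S" "z \<le> y"
        using maximal_elems_dominate[OF assms(1)] z(1) by blast
      show "z = x"
      proof (cases "y = G")
        case True
        with x y z show ?thesis unfolding maximal_elems_def by auto
      next
        case False
        have "x \<le> G" "x \<in> S" using x unfolding maximal_elems_def by auto
        with apart[OF y(1) False] y(2) z(2) assms(2) show ?thesis
          by (metis order_trans)
      qed
    qed
    with x show ?thesis unfolding maximal_elems_def by auto
  qed
qed

lemma join_map_iso_iff_onto:
  "join_map_iso M F \<longleftrightarrow>
     (\<lambda>h. Sup (h ` M)) ` interval_product M = {bot..F} \<and>
     (\<forall>h\<in>interval_product M. \<forall>h'\<in>interval_product M.
        (\<forall>H\<in>M. h H \<le> h' H) \<longleftrightarrow> Sup (h ` M) \<le> Sup (h' ` M))"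
proof -
  have "inj_on (\<lambda>h. Sup (h ` M)) (interval_product M)"
    if le_iff: "\<forall>h\<in>interval_product M. \<forall>h'\<in>interval_product M.
        (\<forall>H\<in>M. h H \<le> h' H) \<longleftrightarrow> Sup (h ` M) \<le> Sup (h' ` M)"
  proof (rule inj_onI)
    fix h h' assume h: "h \<in> interval_product M" and h': "h' \<in> interval_product M"
      and eq: "Sup (h ` M) = Sup (h' ` M)"
    have "\<forall>H\<in>M. h H = h' H"
      using le_iff h h' eq by (metis order.refl order.antisym)
    moreover have "\<forall>H. H \<notin> M \<longrightarrow> h H = h' H"
      using h h' by (simp add: interval_product_def)
    ultimately show "h = h'" by auto
  qed
  then show ?thesis unfolding join_map_iso_def bij_betw_def by blast
qed

lemma join_map_iso_apart:
  assumes "join_map_iso M F" "H\<^sub>1 \<in> M" "H\<^sub>2 \<in> M" "H\<^sub>1 \<noteq> H\<^sub>2" "x \<le> H\<^sub>1" "x \<le> H\<^sub>2"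
  shows "x = bot"
proof -
  define single where "single H\<^sub>0 = (\<lambda>H. if H = H\<^sub>0 then x else bot)" for H\<^sub>0 :: 'a
  have single_mem: "single H\<^sub>0 \<in> interval_product M" if "H\<^sub>0 \<in> M" "x \<le> H\<^sub>0" for H\<^sub>0
    using that unfolding single_def interval_product_def by auto
  have Sup_single: "Sup (single H\<^sub>0 ` M) = x" if "H\<^sub>0 \<in> M" for H\<^sub>0
    by (rule antisym, rule Sup_least)
       (auto simp: single_def intro!: Sup_upper image_eqI[where x = H\<^sub>0] that)
  have "inj_on (\<lambda>h. Sup (h ` M)) (interval_product M)"
    using assms(1) unfolding join_map_iso_def bij_betw_def by blast
  then have "single H\<^sub>1 = single H\<^sub>2"
    using single_mem Sup_single assms(2-6) by (metis inj_onD)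
  then have "single H\<^sub>1 H\<^sub>1 = single H\<^sub>2 H\<^sub>1"
    by simp
  then show ?thesis
    using assms(4) unfolding single_def by simp
qed

lemma join_map_iso_le_iff_subset:
  assumes "join_map_iso N G" "N \<subseteq> M" "h \<in> interval_product M" "h' \<in> interval_product M"
  shows "(\<forall>H\<in>N. h H \<le> h' H) \<longleftrightarrow> Sup (h ` N) \<le> Sup (h' ` N)"
proof -
  define restr where "restr k = (\<lambda>H. if H \<in> N then k H else bot)" for k :: "'a \<Rightarrow> 'a"
  have restr_mem: "restr k \<in> interval_product N" if "k \<in> interval_product M" for k
    using that assms(2) unfolding restr_def interval_product_def by auto
  have restr_image: "restr k ` N = k ` N" for k
    unfolding restr_def by auto
  have "(\<forall>H\<in>N. restr h H \<le> restr h' H) \<longleftrightarrow> Sup (restr h ` N) \<le> Sup (restr h' ` N)"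
    using assms(1) restr_mem[OF assms(3)] restr_mem[OF assms(4)]
    unfolding join_map_iso_iff_onto by blast
  then show ?thesis
    unfolding restr_image by (simp add: restr_def)
qed

lemma join_map_iso_transfer:
  assumes "join_map_iso M F"
    and onto: "c ` interval_product M' = interval_product M"
    and Sup_eq: "\<And>h. h \<in> interval_product M' \<Longrightarrow> Sup (c h ` M) = Sup (h ` M')"
    and le_iff: "\<And>h h'. h \<in> interval_product M' \<Longrightarrow> h' \<in> interval_product M' \<Longrightarrow>
                   (\<forall>H\<in>M. c h H \<le> c h' H) \<longleftrightarrow> (\<forall>H\<in>M'. h H \<le> h' H)"
  shows "join_map_iso M' F"
proof -
  have "(\<lambda>h. Sup (h ` M')) ` interval_product M' = (\<lambda>g. Sup (g ` M)) ` c ` interval_product M'"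
    using Sup_eq by (force simp: image_image)
  with onto assms(1) have "(\<lambda>h. Sup (h ` M')) ` interval_product M' = {bot..F}"
    unfolding join_map_iso_iff_onto by simp
  moreover have "(\<forall>H\<in>M'. h H \<le> h' H) \<longleftrightarrow> Sup (h ` M') \<le> Sup (h' ` M')"
    if "h \<in> interval_product M'" "h' \<in> interval_product M'" for h h'
  proof -
    have "c h \<in> interval_product M" "c h' \<in> interval_product M"
      using that onto by blast+
    with assms(1) have "(\<forall>H\<in>M. c h H \<le> c h' H) \<longleftrightarrow> Sup (c h ` M) \<le> Sup (c h' ` M)"
      unfolding join_map_iso_iff_onto by blast
    with that show ?thesis
      using Sup_eq le_iff by simp
  qed
  ultimately show ?thesis
    unfolding join_map_iso_iff_onto by blast
qed

definition collapse_block :: "'a::complete_lattice set \<Rightarrow> 'a \<Rightarrow> ('a \<Rightarrow> 'a) \<Rightarrow> 'a \<Rightarrow> 'a" where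
  "collapse_block N G h = (\<lambda>H. if H \<in> N then bot else h H)(G := Sup (h ` N))"

lemma collapse_block_mem:
  assumes "G \<in> M" "N \<inter> M = {}" "\<forall>H\<in>N. H \<le> G"
    and h: "h \<in> interval_product (M - {G} \<union> N)"
  shows "collapse_block N G h \<in> interval_product M"
proof -
  have "Sup (h ` N) \<le> G"
  proof (rule Sup_least)
    fix y assume "y \<in> h ` N"
    then obtain H where "H \<in> N" "y = h H" by auto
    moreover have "h H \<le> H"
      using h \<open>H \<in> N\<close> unfolding interval_product_def by blast
    ultimately show "y \<le> G"
      using assms(3) by (metis order_trans)
  qed
  with assms(1,2) h show ?thesis
    unfolding interval_product_def collapse_block_def by auto
qed

lemma Sup_collapse_block:
  assumes "G \<in> M" "N \<inter> M = {}"
  shows "Sup (collapse_block N G h ` M) = Sup (h ` (M - {G} \<union> N))"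
proof -
  have "collapse_block N G h ` M = insert (Sup (h ` N)) (h ` (M - {G}))"
    using assms unfolding collapse_block_def by auto
  then show ?thesis
    by (simp add: image_Un Sup_union_distrib sup_commute)
qed

lemma collapse_block_onto:
  assumes "join_map_iso N G" "G \<in> M" "N \<inter> M = {}" "\<forall>H\<in>N. H \<le> G"
  shows "collapse_block N G ` interval_product (M - {G} \<union> N) = interval_product M"
proof
  show "collapse_block N G ` interval_product (M - {G} \<union> N) \<subseteq> interval_product M"
    using collapse_block_mem[OF assms(2-4)] by blast
next
  show "interval_product M \<subseteq> collapse_block N G ` interval_product (M - {G} \<union> N)"
  proof
    fix g assume g: "g \<in> interval_product M"
    then have "g G \<in> {bot..G}"
      using assms(2) unfolding interval_product_def by auto
    then obtain k where k: "k \<in> interval_product N" "g G = Sup (k ` N)"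
      using assms(1) unfolding join_map_iso_iff_onto by force
    define h where "h = (\<lambda>H. if H \<in> N then k H else if H \<in> M - {G} then g H else bot)"
    have "h \<in> interval_product (M - {G} \<union> N)"
      using g k assms(3) unfolding h_def interval_product_def by auto
    moreover have "collapse_block N G h = g"
    proof
      fix H
      have "h ` N = k ` N" unfolding h_def by auto
      then show "collapse_block N G h H = g H"
        using g k assms(2,3) unfolding collapse_block_def h_def interval_product_def by auto
    qed
    ultimately show "g \<in> collapse_block N G ` interval_product (M - {G} \<union> N)"
      by blast
  qed
qed

lemma collapse_block_le_iff:
  assumes "join_map_iso N G" "G \<in> M" "N \<inter> M = {}"
    and h: "h \<in> interval_product (M - {G} \<union> N)" and h': "h' \<in> interval_product (M - {G} \<union> N)"
  shows "(\<forall>H\<in>M. collapse_block N G h H \<le> collapse_block N G h' H) \<longleftrightarrow>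
         (\<forall>H\<in>M - {G} \<union> N. h H \<le> h' H)"
proof -
  have "(\<forall>H\<in>M. collapse_block N G h H \<le> collapse_block N G h' H) \<longleftrightarrow>
        Sup (h ` N) \<le> Sup (h' ` N) \<and> (\<forall>H\<in>M - {G}. h H \<le> h' H)"
    using assms(2,3) unfolding collapse_block_def by (auto dest: bspec[of M _ G])
  also have "Sup (h ` N) \<le> Sup (h' ` N) \<longleftrightarrow> (\<forall>H\<in>N. h H \<le> h' H)"
    using join_map_iso_le_iff_subset[OF assms(1) _ h h'] by blast
  finally show ?thesis
    by blast
qed

lemma join_map_iso_replace_block:
  assumes "join_map_iso M F" "join_map_iso N G" "G \<in> M" "N \<inter> M = {}" "\<forall>H\<in>N. H \<le> G"
  shows "join_map_iso (M - {G} \<union> N) F"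
  using join_map_iso_transfer[OF assms(1) collapse_block_onto[OF assms(2-5)]]
    Sup_collapse_block[OF assms(3,4)] collapse_block_le_iff[OF assms(2-4)] by blast

lemma building_set_remove_join_map_iso:
  fixes \<G> :: "'a::{finite,complete_lattice} set"
  assumes "building_set \<G>" "G \<in> \<G>" "F \<noteq> bot"
    and JN: "join_map_iso (maximal_elems {H \<in> \<G> - {G}. H \<le> G}) G"
  shows "join_map_iso (maximal_elems {H \<in> \<G> - {G}. H \<le> F}) F"
proof -
  define S where "S = {H \<in> \<G>. H \<le> F}"
  define N where "N = maximal_elems {H \<in> \<G> - {G}. H \<le> G}"
  have JM: "join_map_iso (maximal_elems S) F"
    using assms(1,3) unfolding building_set_def S_def by blast
  have S_remove: "{H \<in> \<G> - {G}. H \<le> F} = S - {G}"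
    unfolding S_def by auto
  show ?thesis
  proof (cases "G \<in> maximal_elems S")
    case False
    then show ?thesis
      using JM maximal_elems_remove_nonmaximal[of S G] unfolding S_remove by simp
  next
    case True
    then have "G \<le> F"
      unfolding maximal_elems_def S_def by auto
    then have below_G: "{H \<in> S - {G}. H \<le> G} = {H \<in> \<G> - {G}. H \<le> G}"
      unfolding S_def by (auto intro: order_trans)
    have bot_notin: "bot \<notin> S"
      using assms(1) unfolding building_set_def S_def by auto
    have "maximal_elems (S - {G}) = (maximal_elems S - {G}) \<union> N"
      using maximal_elems_remove_maximal[OF finite bot_notin True] join_map_iso_apart[OF JM _ True]
      unfolding N_def below_G by blast
    moreover have "N \<inter> maximal_elems S = {}"
      using True below_G unfolding N_def maximal_elems_def by auto
    moreover have "\<forall>H\<in>N. H \<le> G"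
      unfolding N_def maximal_elems_def by auto
    ultimately show ?thesis
      using join_map_iso_replace_block[OF JM JN[folded N_def] True] unfolding S_remove by simp
  qed
qed

theorem lemma2p26:
  fixes \<G> :: "'a::{finite,complete_lattice} set"
  assumes "geometric_lattice TYPE('a)"
    and "building_set \<G>"
    and "G \<in> \<G>"
  shows "building_set (\<G> - {G}) \<longleftrightarrow>
         join_map_iso (maximal_elems {H \<in> \<G> - {G}. H \<le> G}) G"
proof
  assume "building_set (\<G> - {G})"
  moreover have "G \<noteq> bot"
    using assms(2,3) unfolding building_set_def by auto
  ultimately show "join_map_iso (maximal_elems {H \<in> \<G> - {G}. H \<le> G}) G"
    unfolding building_set_def by blast
next
  assume "join_map_iso (maximal_elems {H \<in> \<G> - {G}. H \<le> G}) G"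
  moreover have "\<G> - {G} \<subseteq> UNIV - {bot}"
    using assms(2) unfolding building_set_def by auto
  ultimately show "building_set (\<G> - {G})"
    using building_set_remove_join_map_iso[OF assms(2,3)] unfolding building_set_def by blast
qed

end
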